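(* Let $K\ge2$, $0<q<p$ with $p+(K-1)q=1$, and $\phi\in\Delta$ with $\phi_1\le\cdots\le\phi_K$. If $\theta$ is an MLE for $\phi$, then there exists $n\in\{0,\dots,K-1\}$ such that $\theta=\theta^{[n]}$.
   Context: $\Delta=\{\theta\in\mathbb{R}^K:\theta_i\ge0,\sum_i\theta_i=1\}$. $\mathcal{M}(\theta)_y=q+(p-q)\theta_y$. $\theta\in\Delta$ is an MLE for $\phi$ if it minimizes $D_{KL}(\phi,\mathcal{M}(\theta))=\sum_i\phi_i\log(\phi_i/\mathcal{M}(\theta)_i)$ (convention $0\log(0/\cdot)=0$) over $\Delta$. For sorted $\phi$ and $n\in\{0,\dots,K-1\}$: $\lambda^{[n]}=\frac{(p-q)\sum_{i>n}\phi_i}{1-nq}$, and $\theta^{[n]}\in\mathbb{R}^K$ is given by $\theta^{[n]}_i=0$ for $i\le n$ and $\theta^{[n]}_i=\frac{\phi_i}{\lambda^{[n]}}-\frac{q}{p-q}$ for $i>n$. *)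

theory Defs
  imports Complex_Main
begin

text \<open>Vectors in R^K are represented as functions nat => real, indexed by 1..K.\<close>

definition simplex :: "nat \<Rightarrow> (nat \<Rightarrow> real) set" where
  "simplex K = {\<theta>. (\<forall>i\<in>{1..K}. \<theta> i \<ge> 0) \<and> (\<Sum>i=1..K. \<theta> i) = 1}"

definition model :: "real \<Rightarrow> real \<Rightarrow> (nat \<Rightarrow> real) \<Rightarrow> nat \<Rightarrow> real" where
  "model p q \<theta> y = q + (p - q) * \<theta> y"

definition KL :: "nat \<Rightarrow> (nat \<Rightarrow> real) \<Rightarrow> (nat \<Rightarrow> real) \<Rightarrow> real" where
  "KL K \<phi> \<mu> = (\<Sum>i=1..K. if \<phi> i = 0 then 0 else \<phi> i * ln (\<phi> i / \<mu> i))"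

definition is_MLE :: "nat \<Rightarrow> real \<Rightarrow> real \<Rightarrow> (nat \<Rightarrow> real) \<Rightarrow> (nat \<Rightarrow> real) \<Rightarrow> bool" where
  "is_MLE K p q \<phi> \<theta> \<longleftrightarrow> \<theta> \<in> simplex K \<and>
     (\<forall>\<theta>'\<in>simplex K. KL K \<phi> (model p q \<theta>) \<le> KL K \<phi> (model p q \<theta>'))"

definition lam :: "nat \<Rightarrow> real \<Rightarrow> real \<Rightarrow> (nat \<Rightarrow> real) \<Rightarrow> nat \<Rightarrow> real" where
  "lam K p q \<phi> n = (p - q) * (\<Sum>i\<in>{n<..K}. \<phi> i) / (1 - real n * q)"

definition theta_n :: "nat \<Rightarrow> real \<Rightarrow> real \<Rightarrow> (nat \<Rightarrow> real) \<Rightarrow> nat \<Rightarrow> nat \<Rightarrow> real" where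
  "theta_n K p q \<phi> n i = (if i \<le> n then 0 else \<phi> i / lam K p q \<phi> n - q / (p - q))"

end

theory Submission imports Defs begin

text \<open>
  Moving mass from a coordinate \<open>i\<close> with \<open>\<theta>\<^sub>i > 0\<close> to any other coordinate \<open>j\<close> cannot
  decrease the divergence at an MLE, and the first-order condition of this perturbation is
  \<open>\<phi>\<^sub>j / M\<^sub>j \<le> \<phi>\<^sub>i / M\<^sub>i\<close> for \<open>M = \<M>(\<theta>)\<close>. Hence \<open>\<phi>\<^sub>k / M\<^sub>k\<close> takes a common value \<open>c > 0\<close>
  on the support of \<open>\<theta>\<close> and is at most \<open>c\<close> off it, which amounts to the water-filling form
  \<open>\<theta>\<^sub>k = max 0 (\<phi>\<^sub>k / \<mu> - q / (p - q))\<close> with \<open>\<mu> = c (p - q)\<close>. Since \<open>\<phi>\<close> is sorted,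
  the support is a final segment \<open>{n+1..K}\<close>, and \<open>\<Sum> \<theta> = 1\<close> forces \<open>\<mu> = \<lambda>\<^bsup>[n]\<^esup>\<close>.
\<close>

lemma model_pos:
  assumes "0 < q" "q < p" "\<theta> k \<ge> 0"
  shows "model p q \<theta> k > 0"
  using assms by (simp add: model_def add_pos_nonneg)

lemma simplex_has_pos:
  assumes "\<theta> \<in> simplex K"
  shows "\<exists>i\<in>{1..K}. \<theta> i > 0"
proof (rule ccontr)
  assume "\<not> ?thesis"
  then have "\<forall>i\<in>{1..K}. \<theta> i = 0"
    using assms by (force simp: simplex_def)
  then show False
    using assms by (simp add: simplex_def)
qed

lemma KL_diff:
  assumes "\<forall>k\<in>{1..K}. \<phi> k \<ge> 0" "\<forall>k\<in>{1..K}. \<mu> k > 0" "\<forall>k\<in>{1..K}. \<nu> k > 0"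
  shows "KL K \<phi> \<nu> - KL K \<phi> \<mu> = (\<Sum>k=1..K. \<phi> k * (ln (\<mu> k) - ln (\<nu> k)))"
  unfolding KL_def sum_subtractf[symmetric]
proof (rule sum.cong)
  fix k assume "k \<in> {1..K}"
  then have "\<phi> k \<noteq> 0 \<Longrightarrow> \<phi> k > 0" "\<mu> k > 0" "\<nu> k > 0"
    using assms by force+
  then show "(if \<phi> k = 0 then 0 else \<phi> k * ln (\<phi> k / \<nu> k))
      - (if \<phi> k = 0 then 0 else \<phi> k * ln (\<phi> k / \<mu> k)) = \<phi> k * (ln (\<mu> k) - ln (\<nu> k))"
    by (auto simp: ln_div algebra_simps)
qed simp

definition transfer :: "(nat \<Rightarrow> real) \<Rightarrow> nat \<Rightarrow> nat \<Rightarrow> real \<Rightarrow> nat \<Rightarrow> real" where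
  "transfer \<theta> i j h k = \<theta> k - (if k = i then h else 0) + (if k = j then h else 0)"

lemma transfer_in_simplex:
  assumes "\<theta> \<in> simplex K" "i \<in> {1..K}" "j \<in> {1..K}" "i \<noteq> j" "0 \<le> h" "h \<le> \<theta> i"
  shows "transfer \<theta> i j h \<in> simplex K"
  using assms by (auto simp: simplex_def transfer_def sum.distrib sum_subtractf)

lemma DERIV_nonpos_if_right_max:
  fixes f :: "real \<Rightarrow> real"
  assumes "DERIV f x :> l" "0 < d" "\<And>h. 0 < h \<Longrightarrow> h \<le> d \<Longrightarrow> f (x + h) \<le> f x"
  shows "l \<le> 0"
proof (rule ccontr)
  assume "\<not> l \<le> 0"
  then obtain e where "e > 0" "\<forall>h>0. h < e \<longrightarrow> f x < f (x + h)"
    using DERIV_pos_inc_right[OF assms(1)] by force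
  moreover have "0 < min (e/2) d" "min (e/2) d < e"
    using \<open>e > 0\<close> assms(2) by auto
  ultimately show False
    using assms(3)[of "min (e/2) d"] by fastforce
qed

lemma MLE_ratio_le:
  assumes q: "0 < q" and pq: "q < p" and phi: "\<phi> \<in> simplex K" and mle: "is_MLE K p q \<phi> \<theta>"
    and i: "i \<in> {1..K}" and j: "j \<in> {1..K}" and ij: "i \<noteq> j" and pos: "\<theta> i > 0"
  shows "\<phi> j / model p q \<theta> j \<le> \<phi> i / model p q \<theta> i"
proof -
  have th: "\<theta> \<in> simplex K"
    using mle by (simp add: is_MLE_def)
  define Mi Mj where "Mi = model p q \<theta> i" and "Mj = model p q \<theta> j"
  have "Mi > 0" "Mj > 0"
    using model_pos q pq pos th j by (force simp: Mi_def Mj_def simplex_def)+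
  \<comment> \<open>up to a constant, \<open>f h\<close> is minus the divergence after moving mass \<open>h\<close> from \<open>i\<close> to \<open>j\<close>\<close>
  define f where "f h = \<phi> i * ln (Mi - (p - q) * h) + \<phi> j * ln (Mj + (p - q) * h)" for h
  have right_max: "f h \<le> f 0" if "0 < h" "h \<le> \<theta> i" for h
  proof -
    let ?\<theta>' = "transfer \<theta> i j h"
    have "?\<theta>' \<in> simplex K"
      using transfer_in_simplex th i j ij that by simp
    then have pos': "\<forall>k\<in>{1..K}. model p q ?\<theta>' k > 0" "\<forall>k\<in>{1..K}. model p q \<theta> k > 0"
      using th q pq by (auto intro: model_pos simp: simplex_def)
    have "0 \<le> KL K \<phi> (model p q ?\<theta>') - KL K \<phi> (model p q \<theta>)"
      using mle \<open>?\<theta>' \<in> simplex K\<close> by (simp add: is_MLE_def)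
    also have "\<dots> = (\<Sum>k=1..K. \<phi> k * (ln (model p q \<theta> k) - ln (model p q ?\<theta>' k)))"
      using phi pos' by (intro KL_diff) (auto simp: simplex_def)
    also have "\<dots> = (\<Sum>k\<in>{i,j}. \<phi> k * (ln (model p q \<theta> k) - ln (model p q ?\<theta>' k)))"
      using i j by (intro sum.mono_neutral_right) (auto simp: transfer_def model_def)
    also have "\<dots> = f 0 - f h"
      using ij by (simp add: f_def Mi_def Mj_def transfer_def model_def algebra_simps)
    finally show ?thesis
      by simp
  qed
  have "DERIV f 0 :> (p - q) * (\<phi> j / Mj - \<phi> i / Mi)"
    unfolding f_def using \<open>Mi > 0\<close> \<open>Mj > 0\<close>
    by (auto intro!: derivative_eq_intros simp: field_simps)
  then have "(p - q) * (\<phi> j / Mj - \<phi> i / Mi) \<le> 0"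
    using DERIV_nonpos_if_right_max pos right_max by fastforce
  then show ?thesis
    using pq by (simp add: mult_le_0_iff Mi_def Mj_def)
qed

lemma MLE_water_filling:
  assumes q: "0 < q" and pq: "q < p" and phi: "\<phi> \<in> simplex K" and mle: "is_MLE K p q \<phi> \<theta>"
  shows "\<exists>\<mu>>0. \<forall>k\<in>{1..K}. \<theta> k = max 0 (\<phi> k / \<mu> - q / (p - q))"
proof -
  have th: "\<theta> \<in> simplex K"
    using mle by (simp add: is_MLE_def)
  define M where "M = model p q \<theta>"
  have M: "M k = q + (p - q) * \<theta> k" "M k > 0" if "k \<in> {1..K}" for k
    using that th model_pos[OF q pq] by (auto simp: M_def model_def simplex_def)
  obtain i where i: "i \<in> {1..K}" "\<theta> i > 0"
    using simplex_has_pos[OF th] by blast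
  define c where "c = \<phi> i / M i"
  have ratio_le: "\<phi> k / M k \<le> c" if "k \<in> {1..K}" for k
    using MLE_ratio_le[OF q pq phi mle i(1) that _ i(2)] by (cases "k = i") (auto simp: c_def M_def)
  have ratio_eq: "\<phi> k / M k = c" if "k \<in> {1..K}" "\<theta> k > 0" for k
    using MLE_ratio_le[OF q pq phi mle that(1) i(1) _ that(2)] ratio_le[OF that(1)]
    by (cases "k = i") (auto simp: c_def M_def)
  have "c > 0"
  proof -
    obtain k where "k \<in> {1..K}" "\<phi> k > 0"
      using simplex_has_pos[OF phi] by blast
    then show ?thesis
      using ratio_le M(2) by (meson divide_pos_pos order_less_le_trans)
  qed
  have shift: "\<phi> k / (c * (p - q)) - q / (p - q) = (\<phi> k - c * q) / (c * (p - q))" for k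
    using \<open>c > 0\<close> by (simp add: diff_divide_distrib)
  have "\<theta> k = max 0 (\<phi> k / (c * (p - q)) - q / (p - q))" if k: "k \<in> {1..K}" for k
  proof (cases "\<theta> k > 0")
    case True
    then have "\<phi> k = c * (q + (p - q) * \<theta> k)"
      using ratio_eq[OF k] M[OF k] by (simp add: field_simps)
    then have "\<phi> k - c * q = c * (p - q) * \<theta> k"
      by (simp add: algebra_simps)
    then have "\<phi> k / (c * (p - q)) - q / (p - q) = \<theta> k"
      using shift \<open>c > 0\<close> pq by simp
    then show ?thesis
      using True by simp
  next
    case False
    then have "\<theta> k = 0"
      using th k by (force simp: simplex_def)
    moreover have "\<phi> k \<le> c * q"
      using ratio_le[OF k] M[OF k] q \<open>\<theta> k = 0\<close> by (simp add: divide_le_eq)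
    ultimately show ?thesis
      using shift \<open>c > 0\<close> pq by (simp add: divide_nonpos_pos)
  qed
  then show ?thesis
    using \<open>c > 0\<close> pq by (intro exI[of _ "c * (p - q)"]) simp
qed

lemma mono_sublevel_initial_segment:
  fixes \<psi> :: "nat \<Rightarrow> real"
  assumes mono: "\<forall>i j. 1 \<le> i \<and> i \<le> j \<and> j \<le> K \<longrightarrow> \<psi> i \<le> \<psi> j"
  obtains n where "n \<le> K" "\<And>k. k \<in> {1..K} \<Longrightarrow> \<psi> k \<le> t \<longleftrightarrow> k \<le> n"
proof
  define S where "S = insert 0 {k\<in>{1..K}. \<psi> k \<le> t}"
  have S: "finite S" "0 \<in> S"
    by (simp_all add: S_def)
  show "Max S \<le> K"
    using S by (subst Max_le_iff) (auto simp: S_def)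
  fix k assume k: "k \<in> {1..K}"
  show "\<psi> k \<le> t \<longleftrightarrow> k \<le> Max S"
  proof
    assume "\<psi> k \<le> t"
    then show "k \<le> Max S"
      using S k by (intro Max_ge) (auto simp: S_def)
  next
    assume "k \<le> Max S"
    moreover have "Max S \<in> S"
      using S by (intro Max_in) auto
    ultimately have "Max S \<in> {1..K}" "\<psi> (Max S) \<le> t"
      using k by (auto simp: S_def)
    then show "\<psi> k \<le> t"
      using k mono \<open>k \<le> Max S\<close> by force
  qed
qed

lemma lam_eq_if_normalized:
  assumes "n < K" "0 < q" "q < p" "p + (real K - 1) * q = 1" "0 < \<mu>"
    and "(\<Sum>k\<in>{n<..K}. \<phi> k / \<mu> - q / (p - q)) = 1"
  shows "\<mu> = lam K p q \<phi> n"
proof -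
  have "real n * q \<le> (real K - 1) * q"
    using assms(1,2) by (intro mult_right_mono) auto
  then have "1 - real n * q > 0"
    using assms(2-4) by linarith
  have "(\<Sum>k\<in>{n<..K}. \<phi> k) / \<mu> - (real K - real n) * (q / (p - q)) = 1"
    using assms(1,6) by (simp add: sum_subtractf sum_divide_distrib of_nat_diff)
  then have "(p - q) * (\<Sum>k\<in>{n<..K}. \<phi> k) = \<mu> * (p - q + (real K - real n) * q)"
    using assms(3,5) by (simp add: field_simps)
  also have "p - q + (real K - real n) * q = 1 - real n * q"
    using assms(4) by (simp add: algebra_simps)
  finally show ?thesis
    using \<open>1 - real n * q > 0\<close> by (simp add: lam_def field_simps)
qed

theorem lemma2:
  fixes K :: nat and p q :: real and \<phi> \<theta> :: "nat \<Rightarrow> real"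
  assumes "K \<ge> 2" and "0 < q" and "q < p" and "p + (real K - 1) * q = 1"
    and "\<phi> \<in> simplex K"
    and "\<forall>i j. 1 \<le> i \<and> i \<le> j \<and> j \<le> K \<longrightarrow> \<phi> i \<le> \<phi> j"
    and "is_MLE K p q \<phi> \<theta>"
  shows "\<exists>n\<in>{0..K-1}. \<forall>i\<in>{1..K}. \<theta> i = theta_n K p q \<phi> n i"
proof -
  obtain \<mu> where "\<mu> > 0" and water: "\<forall>k\<in>{1..K}. \<theta> k = max 0 (\<phi> k / \<mu> - q / (p - q))"
    using MLE_water_filling assms(2,3,5,7) by blast
  define \<psi> where "\<psi> k = \<phi> k / \<mu> - q / (p - q)" for k
  have "\<forall>i j. 1 \<le> i \<and> i \<le> j \<and> j \<le> K \<longrightarrow> \<psi> i \<le> \<psi> j"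
    using assms(6) \<open>\<mu> > 0\<close> by (auto simp: \<psi>_def divide_right_mono)
  then obtain n where "n \<le> K" and below: "\<And>k. k \<in> {1..K} \<Longrightarrow> \<psi> k \<le> 0 \<longleftrightarrow> k \<le> n"
    using mono_sublevel_initial_segment[where t = 0] by blast
  have \<theta>_eq: "\<theta> k = (if k \<le> n then 0 else \<psi> k)" if "k \<in> {1..K}" for k
    using water below[OF that] that by (auto simp: \<psi>_def)
  have "\<theta> \<in> simplex K"
    using assms(7) by (simp add: is_MLE_def)
  then obtain i where "i \<in> {1..K}" "\<theta> i > 0"
    using simplex_has_pos by blast
  then have "n < K"
    using \<theta>_eq[of i] by (auto split: if_splits)
  have "(\<Sum>k\<in>{n<..K}. \<psi> k) = (\<Sum>k=1..K. \<theta> k)"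
    by (rule sum.mono_neutral_cong_left) (auto simp: \<theta>_eq)
  also have "\<dots> = 1"
    using \<open>\<theta> \<in> simplex K\<close> by (simp add: simplex_def)
  finally have "\<mu> = lam K p q \<phi> n"
    using lam_eq_if_normalized \<open>n < K\<close> assms(2-4) \<open>\<mu> > 0\<close> by (simp add: \<psi>_def)
  then show ?thesis
    using \<theta>_eq \<open>n < K\<close> by (auto simp: theta_n_def \<psi>_def)
qed

end
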